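(* Let $P$ be the set of $n\geq 3$ points equally spaced on the unit circle. Every geometric spanner on $P$ with dilation less than $2$ contains every edge of the convex hull of $P$ (i.e. every edge between two points consecutive on the circle).
   Context: A geometric spanner on $P$ is a graph with vertex set $P$ whose edges are weighted by the Euclidean distance between their endpoints. Its dilation is $\max\{ d_G(p,p')/|pp'| : p\neq p'\in P\}$, where $d_G$ is the shortest-path distance and $|pp'|$ the Euclidean distance. *)

theory Defs
  imports "HOL-Analysis.Analysis"
begin

definition regular_points :: "nat \<Rightarrow> complex set" where
  "regular_points n = {cis (2 * pi * real k / real n) | k. k < n}"

definition geometric_graph :: "complex set \<Rightarrow> complex set set \<Rightarrow> bool" where
  "geometric_graph V E \<longleftrightarrow> (\<forall>e\<in>E. \<exists>p q. p \<in> V \<and> q \<in> V \<and> p \<noteq> q \<and> e = {p, q})"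

definition is_walk :: "complex set set \<Rightarrow> complex \<Rightarrow> complex \<Rightarrow> complex list \<Rightarrow> bool" where
  "is_walk E p q xs \<longleftrightarrow> xs \<noteq> [] \<and> hd xs = p \<and> last xs = q \<and>
     (\<forall>i. Suc i < length xs \<longrightarrow> {xs ! i, xs ! Suc i} \<in> E)"

definition walk_length :: "complex list \<Rightarrow> real" where
  "walk_length xs = sum_list (map (\<lambda>(a, b). dist a b) (zip xs (tl xs)))"

text \<open>Shortest-path distance (infinite if no path exists).\<close>
definition graph_dist :: "complex set set \<Rightarrow> complex \<Rightarrow> complex \<Rightarrow> ereal" where
  "graph_dist E p q = (INF xs \<in> {xs. is_walk E p q xs}. ereal (walk_length xs))"

definition dilation :: "complex set \<Rightarrow> complex set set \<Rightarrow> ereal" where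
  "dilation V E = (SUP pq \<in> {(p, q). p \<in> V \<and> q \<in> V \<and> p \<noteq> q}.
      graph_dist E (fst pq) (snd pq) / ereal (dist (fst pq) (snd pq)))"

end

theory Submission
  imports Defs
begin

text \<open>Distinct points of the regular n-gon are at least one side length s apart, and two
consecutive vertices are exactly s apart. If such a pair p, q is not an edge, every walk from
p to q must pass through a third vertex r, so its length is at least
dist p r + dist r q \<ge> 2 s = 2 dist p q, and the dilation is at least 2.\<close>

lemma dist_cis_cis: "dist (cis a) (cis b) = dist 1 (cis (b - a))"
proof -
  have "cis a - cis b = cis a * (1 - cis (b - a))"
    by (simp add: algebra_simps cis_mult)
  then show ?thesis
    by (simp add: dist_norm norm_mult)
qed

lemma dist_1_cis_sq: "(dist 1 (cis t))\<^sup>2 = 2 - 2 * cos t"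
proof -
  have "(dist 1 (cis t))\<^sup>2 = (1 - cos t)\<^sup>2 + (sin t)\<^sup>2"
    by (simp add: dist_norm cmod_power2)
  also have "\<dots> = 2 - 2 * cos t"
    by (simp add: power2_diff sin_squared_eq)
  finally show ?thesis .
qed

lemma cos_le_cos_2pi_div:
  fixes m :: int and n :: nat
  assumes "0 < n" and "\<not> int n dvd m"
  shows "cos (2 * pi * m / n) \<le> cos (2 * pi / n)"
proof -
  define r where "r = m mod int n"
  \<comment> \<open>cos is even and 2\<pi>-periodic, so only the distance k of m to the nearest multiple of n matters\<close>
  define k where "k = min r (int n - r)"
  have r: "0 < r" "r < int n"
    using assms by (auto simp: r_def dvd_eq_mod_eq_0 order.not_eq_order_implies_strict)
  have k: "1 \<le> k" "2 * k \<le> int n"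
    using r by (auto simp: k_def min_def)
  have "real_of_int m = real_of_int (r + int n * (m div int n))"
    by (simp add: r_def)
  then have "2 * pi * m / n = 2 * pi * r / n + 2 * pi * of_int (m div int n)"
    using assms(1) by (simp add: field_simps)
  then have "cos (2 * pi * m / n) = cos (2 * pi * r / n)"
    by (simp add: cos_add)
  also have "\<dots> = cos (2 * pi * k / n)"
  proof (cases "k = r")
    case False
    then have "2 * pi * r / n = 2 * pi - 2 * pi * k / n"
      using assms(1) by (simp add: k_def min_def field_simps split: if_splits)
    then show ?thesis
      by simp
  qed simp
  also have "\<dots> \<le> cos (2 * pi / n)"
  proof (rule cos_monotone_0_pi_le)
    show "0 \<le> 2 * pi / n"
      by simp
    show "2 * pi / n \<le> 2 * pi * k / n"
      using k(1) by (simp add: divide_right_mono)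
    show "2 * pi * k / n \<le> pi"
      using k(2) assms(1) by (simp add: field_simps flip: of_int_le_iff)
  qed
  finally show ?thesis .
qed

lemma cis_2pi_div_mod:
  fixes k n :: nat
  shows "cis (2 * pi * real (k mod n) / real n) = cis (2 * pi * real k / real n)"
proof (cases "n = 0")
  case False
  have k_eq: "real k = real (k mod n) + real n * real (k div n)"
    by (metis mod_div_mult_eq mult.commute of_nat_add of_nat_mult)
  have "2 * pi * real k / real n = 2 * pi * real (k mod n) / real n + 2 * pi * real (k div n)"
    using False by (subst k_eq) (simp add: field_simps)
  then show ?thesis
    by (simp flip: cis_mult)
qed simp

lemma cis_in_regular_points:
  fixes k n :: nat
  assumes "0 < n"
  shows "cis (2 * pi * real k / real n) \<in> regular_points n"
  unfolding regular_points_def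
  by (intro CollectI exI[of _ "k mod n"]) (simp add: assms cis_2pi_div_mod)

lemma dist_cis_2pi_div_Suc:
  fixes k n :: nat
  shows "dist (cis (2 * pi * real k / real n)) (cis (2 * pi * real (Suc k) / real n))
    = dist 1 (cis (2 * pi / real n))"
proof -
  have "2 * pi * real (Suc k) / real n - 2 * pi * real k / real n = 2 * pi / real n"
    by (simp add: add_divide_distrib distrib_left)
  then show ?thesis
    unfolding dist_cis_cis by simp
qed

lemma dist_1_cis_2pi_div_pos:
  fixes n :: nat
  assumes "2 \<le> n"
  shows "0 < dist 1 (cis (2 * pi / real n))"
proof -
  have "cos (2 * pi / n) < cos 0"
  proof (rule cos_monotone_0_pi)
    show "0 < 2 * pi / n"
      using assms by simp
    show "2 * pi / n \<le> pi"
      using assms by (simp add: field_simps)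
  qed simp
  then have "0 < (dist 1 (cis (2 * pi / n)))\<^sup>2"
    by (simp add: dist_1_cis_sq)
  then show ?thesis
    by simp
qed

lemma dist_regular_points_ge:
  assumes "x \<in> regular_points n" "y \<in> regular_points n" "x \<noteq> y"
  shows "dist 1 (cis (2 * pi / real n)) \<le> dist x y"
proof -
  obtain j l where j: "j < n" "x = cis (2 * pi * j / n)" and l: "l < n" "y = cis (2 * pi * l / n)"
    using assms(1,2) unfolding regular_points_def by blast
  define m where "m = int l - int j"
  have "j \<noteq> l"
    using assms(3) j(2) l(2) by auto
  then have "m \<noteq> 0"
    by (simp add: m_def)
  have "\<bar>m\<bar> < int n"
    using j(1) l(1) by (simp add: m_def abs_if)
  have "\<not> int n dvd m"
    using dvd_imp_le_int[of m "int n"] \<open>m \<noteq> 0\<close> \<open>\<bar>m\<bar> < int n\<close> by linarith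
  then have cos_le: "cos (2 * pi * m / n) \<le> cos (2 * pi / n)"
    using j(1) by (intro cos_le_cos_2pi_div) simp
  have "2 * pi * real l / real n - 2 * pi * real j / real n = 2 * pi * m / n"
    by (simp add: m_def diff_divide_distrib right_diff_distrib)
  then have "dist x y = dist 1 (cis (2 * pi * m / n))"
    unfolding j(2) l(2) dist_cis_cis by simp
  then have "(dist 1 (cis (2 * pi / n)))\<^sup>2 \<le> (dist x y)\<^sup>2"
    using cos_le by (simp add: dist_1_cis_sq)
  then show ?thesis
    by (rule power2_le_imp_le) simp
qed

lemma is_walk_singleton: "is_walk E p q [x] \<longleftrightarrow> x = p \<and> x = q"
  unfolding is_walk_def by auto

lemma is_walk_Cons_Cons:
  "is_walk E p q (x # y # ys) \<longleftrightarrow> x = p \<and> {x, y} \<in> E \<and> is_walk E y q (y # ys)"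
  unfolding is_walk_def by (auto simp: nth_Cons split: nat.split)

lemma walk_length_Cons_Cons: "walk_length (x # y # ys) = dist x y + walk_length (y # ys)"
  by (simp add: walk_length_def)

lemma dist_hd_last_le_walk_length: "xs \<noteq> [] \<Longrightarrow> dist (hd xs) (last xs) \<le> walk_length xs"
proof (induction xs rule: induct_list012)
  case (3 x y ys)
  have "dist x (last (y # ys)) \<le> dist x y + dist y (last (y # ys))"
    by (rule dist_triangle)
  also have "\<dots> \<le> dist x y + walk_length (y # ys)"
    using "3.IH"(2) by simp
  finally show ?case
    by (simp add: walk_length_Cons_Cons)
qed (simp_all add: walk_length_def)

lemma dist_via_le_walk_length:
  "r \<in> set xs \<Longrightarrow> dist (hd xs) r + dist r (last xs) \<le> walk_length xs"
proof (induction xs rule: induct_list012)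
  case (3 x y ys)
  show ?case
  proof (cases "r = x")
    case True
    then show ?thesis
      using dist_hd_last_le_walk_length[of "x # y # ys"] by simp
  next
    case False
    have "dist x r + dist r (last (y # ys)) \<le> dist x y + (dist y r + dist r (last (y # ys)))"
      using dist_triangle[of x r y] by simp
    also have "\<dots> \<le> dist x y + walk_length (y # ys)"
      using "3.IH"(2) "3.prems" False by simp
    finally show ?thesis
      by (simp add: walk_length_Cons_Cons)
  qed
qed (simp_all add: walk_length_def)

lemma set_walk_subset:
  assumes "geometric_graph V E" "is_walk E p q xs" "p \<in> V"
  shows "set xs \<subseteq> V"
  using assms(2,3)
proof (induction xs arbitrary: p rule: induct_list012)
  case (3 x y ys)
  then have "x = p" "{p, y} \<in> E" "is_walk E y q (y # ys)"
    by (auto simp: is_walk_Cons_Cons)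
  moreover have "y \<in> V"
    using assms(1) \<open>{p, y} \<in> E\<close> unfolding geometric_graph_def by (fastforce simp: doubleton_eq_iff)
  ultimately show ?case
    using "3.IH"(2) "3.prems"(2) by simp
qed (simp_all add: is_walk_singleton)

lemma walk_within_pair_uses_edge:
  assumes "is_walk E u q xs" "set xs \<subseteq> {p, q}" "u \<noteq> q"
  shows "{p, q} \<in> E"
  using assms
proof (induction xs arbitrary: u rule: induct_list012)
  case (3 x y ys)
  then have "u = p" "{p, y} \<in> E" "is_walk E y q (y # ys)" "set (y # ys) \<subseteq> {p, q}"
    by (auto simp: is_walk_Cons_Cons)
  then show ?case
    using "3.IH"(2) by (cases "y = q") auto
qed (simp_all add: is_walk_singleton is_walk_def)

lemma graph_dist_ge_twice_separation:
  assumes "geometric_graph V E" "p \<in> V" "p \<noteq> q" "{p, q} \<notin> E"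
    and separated: "\<And>x y. x \<in> V \<Longrightarrow> y \<in> V \<Longrightarrow> x \<noteq> y \<Longrightarrow> s \<le> dist x y"
  shows "ereal (2 * s) \<le> graph_dist E p q"
  unfolding graph_dist_def
proof (rule INF_greatest)
  fix xs
  assume "xs \<in> {xs. is_walk E p q xs}"
  then have walk: "is_walk E p q xs"
    by simp
  then have ends: "xs \<noteq> []" "hd xs = p" "last xs = q"
    by (simp_all add: is_walk_def)
  have V: "set xs \<subseteq> V"
    using set_walk_subset[OF assms(1) walk assms(2)] .
  obtain r where r: "r \<in> set xs" "r \<noteq> p" "r \<noteq> q"
    using walk_within_pair_uses_edge[OF walk _ assms(3)] assms(4) by blast
  have "q \<in> V"
    using V ends by auto
  then have "s \<le> dist p r" "s \<le> dist r q"
    using separated V r assms(2) by auto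
  moreover have "dist p r + dist r q \<le> walk_length xs"
    using dist_via_le_walk_length[OF r(1)] ends by simp
  ultimately show "ereal (2 * s) \<le> ereal (walk_length xs)"
    by simp
qed

lemma dilation_ge:
  assumes "p \<in> V" "q \<in> V" "p \<noteq> q" "ereal (c * dist p q) \<le> graph_dist E p q"
  shows "ereal c \<le> dilation V E"
proof -
  have "ereal c \<le> graph_dist E p q / ereal (dist p q)"
    using assms(3,4) by (simp add: ereal_le_divide_pos mult.commute)
  also have "\<dots> \<le> dilation V E"
    unfolding dilation_def by (rule SUP_upper2[of "(p, q)"]) (use assms(1-3) in auto)
  finally show ?thesis .
qed

theorem lemma26:
  fixes n :: nat and E :: "complex set set"
  assumes "n \<ge> 3"
    and "geometric_graph (regular_points n) E"
    and "dilation (regular_points n) E < 2"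
  shows "\<forall>k<n. {cis (2 * pi * real k / real n), cis (2 * pi * real (Suc k) / real n)} \<in> E"
proof (intro allI impI)
  fix k
  define p where "p = cis (2 * pi * real k / real n)"
  define q where "q = cis (2 * pi * real (Suc k) / real n)"
  have side: "dist p q = dist 1 (cis (2 * pi / real n))"
    unfolding p_def q_def by (rule dist_cis_2pi_div_Suc)
  then have "p \<noteq> q"
    using dist_1_cis_2pi_div_pos[of n] assms(1) by auto
  have V: "p \<in> regular_points n" "q \<in> regular_points n"
    unfolding p_def q_def by (rule cis_in_regular_points; use assms(1) in simp)+
  have "{p, q} \<in> E"
  proof (rule ccontr)
    assume "{p, q} \<notin> E"
    then have "ereal (2 * dist p q) \<le> graph_dist E p q"
      unfolding side
      by (rule graph_dist_ge_twice_separation[OF assms(2) V(1) \<open>p \<noteq> q\<close> _ dist_regular_points_ge])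
    then have "ereal 2 \<le> dilation (regular_points n) E"
      by (rule dilation_ge[OF V \<open>p \<noteq> q\<close>])
    with assms(3) show False
      by simp
  qed
  then show "{cis (2 * pi * real k / real n), cis (2 * pi * real (Suc k) / real n)} \<in> E"
    by (simp add: p_def q_def)
qed

end
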